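(* Let $\psi$, $s_0$ and $r=r_\psi$ be as in the context, and let $C_r\ge1$ and $s_*$ be such that $r(s_2)\le C_rr(s_1)$ whenever $s_*\le s_1\le s_2\le s_1+s_1^\eta$. For each integer $k\ge s_0$ define $$\overline E_k=\{A\in M_{m,n}(\mathbb R/\mathbb Z): g_k\Lambda_A\in\widetilde\Delta_{\omega_1C_rr(k)}\},\qquad \underline E_k=\{A\in M_{m,n}(\mathbb R/\mathbb Z): g_k\Lambda_A\in\widetilde\Delta_{\omega_2C_r^{-1}r(k+1)}\}.$$ Then $\limsup_{k\to\infty}\underline E_k\subset \mathbf{DI}_{\boldsymbol\alpha,\boldsymbol\beta}(\psi)^c\subset\limsup_{k\to\infty}\overline E_k$.
   Context: $d=m+n$; weight vectors $\boldsymbol\alpha\in(\mathbb R_{>0})^m$, $\boldsymbol\beta\in(\mathbb R_{>0})^n$ with coordinates summing to 1; $\omega_1=\max\{m\alpha_i,n\beta_j\}$, $\omega_2=\min\{m\alpha_i,n\beta_j\}$. $g_s=\mathrm{diag}(e^{\alpha_1s},\dots,e^{\alpha_ms},e^{-\beta_1s},\dots,e^{-\beta_ns})$; $\Lambda_A=\begin{pmatrix}I_m&A\\0&I_n\end{pmatrix}\mathbb Z^d$. $X_d$ is the space of unimodular lattices in $\mathbb R^d$; $\Delta(\Lambda)=\sup_{\mathbf v\in\Lambda\setminus\{0\}}\log(1/\|\mathbf v\|)$ (sup norm); $\widetilde\Delta_\rho:=\bigcup_{0\le s<1}g_{-s}\Delta^{-1}[0,\rho]$. Standing assumptions on $\psi$: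 $t_0>1$, $\psi:[t_0,\infty)\to(0,\infty)$ continuous and decreasing, $\frac1{2t}\le\psi(t)<\frac1t$, and there exist $C_\psi\ge1,\eta\in(0,1)$ with $F_\psi(t_2)\le C_\psi F_\psi(t_1)$ for $t_0\le t_1\le t_2\le t_1e^{(\log t_1)^\eta}$, $F_\psi(t)=1-t\psi(t)$. $s_0=\frac md\log t_0-\frac nd\log\psi(t_0)$, and $r(s)=-\frac1d\log(t\psi(t))$ where $t=t(s)$ solves $s=\frac md\log t-\frac nd\log\psi(t)$ (such $C_r,s_*$ exist). $\mathbf{DI}_{\boldsymbol\alpha,\boldsymbol\beta}(\psi)\subset M_{m,n}(\mathbb R/\mathbb Z)$ is the set of $A$ such that for all sufficiently large $t$ there exist $\mathbf p\in\mathbb Z^m,\mathbf q\in\mathbb Z^n\setminus\{0\}$ with $\max_i|(A\mathbf q-\mathbf p)_i|^{1/\alpha_i}<\psi(t)$ and $\max_j|q_j|^{1/\beta_j}<t$. *)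

theory Defs
  imports "HOL-Analysis.Analysis"
begin

text \<open>Vectors of R^d, d = m + n, are represented as pairs (x, y) with
  x :: real^'m and y :: real^'n.  Matrices A in M_{m,n} are real^'n^'m
  (m rows, n columns); sets of matrices in M_{m,n}(R/Z) are represented by
  their (Z-periodic) preimages in M_{m,n}(R).\<close>

definition intvecs :: "(real^'k) set" where
  "intvecs = {v. \<forall>i. v $ i \<in> \<int>}"

definition supn :: "(real^'m) \<times> (real^'n) \<Rightarrow> real" where
  "supn v = max (Max (range (\<lambda>i. \<bar>fst v $ i\<bar>))) (Max (range (\<lambda>j. \<bar>snd v $ j\<bar>)))"

definition LambdaA :: "real^'n^'m \<Rightarrow> ((real^'m) \<times> (real^'n)) set" where
  "LambdaA A = {(x + A *v y, y) | x y. x \<in> intvecs \<and> y \<in> intvecs}"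

definition gflow :: "real^'m \<Rightarrow> real^'n \<Rightarrow> real \<Rightarrow> (real^'m) \<times> (real^'n) \<Rightarrow> (real^'m) \<times> (real^'n)" where
  "gflow \<alpha> \<beta> s v = ((\<chi> i. exp (\<alpha> $ i * s) * fst v $ i), (\<chi> j. exp (- (\<beta> $ j * s)) * snd v $ j))"

definition Delta :: "((real^'m) \<times> (real^'n)) set \<Rightarrow> real" where
  "Delta L = Sup ((\<lambda>v. ln (1 / supn v)) ` (L - {0}))"

definition Delta_tilde :: "real^'m \<Rightarrow> real^'n \<Rightarrow> real \<Rightarrow> ((real^'m) \<times> (real^'n)) set set" where
  "Delta_tilde \<alpha> \<beta> \<rho> = (\<Union>s\<in>{0..<1}. (\<lambda>L. gflow \<alpha> \<beta> (-s) ` L) ` {L. Delta L \<in> {0..\<rho>}})"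

definition stime :: "nat \<Rightarrow> nat \<Rightarrow> (real \<Rightarrow> real) \<Rightarrow> real \<Rightarrow> real" where
  "stime m n \<psi> t = real m / real (m + n) * ln t - real n / real (m + n) * ln (\<psi> t)"

definition tfun :: "nat \<Rightarrow> nat \<Rightarrow> (real \<Rightarrow> real) \<Rightarrow> real \<Rightarrow> real \<Rightarrow> real" where
  "tfun m n \<psi> t0 s = (THE t. t0 \<le> t \<and> s = stime m n \<psi> t)"

definition rfun :: "nat \<Rightarrow> nat \<Rightarrow> (real \<Rightarrow> real) \<Rightarrow> real \<Rightarrow> real \<Rightarrow> real" where
  "rfun m n \<psi> t0 s = - (1 / real (m + n)) * ln (tfun m n \<psi> t0 s * \<psi> (tfun m n \<psi> t0 s))"

definition omega1 :: "real^'m \<Rightarrow> real^'n \<Rightarrow> real" where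
  "omega1 \<alpha> \<beta> = Max (range (\<lambda>i. real CARD('m) * \<alpha> $ i) \<union> range (\<lambda>j. real CARD('n) * \<beta> $ j))"

definition omega2 :: "real^'m \<Rightarrow> real^'n \<Rightarrow> real" where
  "omega2 \<alpha> \<beta> = Min (range (\<lambda>i. real CARD('m) * \<alpha> $ i) \<union> range (\<lambda>j. real CARD('n) * \<beta> $ j))"

definition DI :: "real^'m \<Rightarrow> real^'n \<Rightarrow> (real \<Rightarrow> real) \<Rightarrow> (real^'n^'m) set" where
  "DI \<alpha> \<beta> \<psi> = {A. \<forall>\<^sub>F t in at_top. \<exists>p q. p \<in> intvecs \<and> q \<in> intvecs \<and> q \<noteq> 0 \<and>
      (\<forall>i. \<bar>(A *v q - p) $ i\<bar> powr (1 / \<alpha> $ i) < \<psi> t) \<and>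
      (\<forall>j. \<bar>q $ j\<bar> powr (1 / \<beta> $ j) < t)}"

end

theory Submission
  imports Defs
begin

text \<open>
  Put \<open>t = t(s)\<close> and \<open>r = r(s)\<close>. The time change
  \<open>s = (m/d) log t - (n/d) log \<psi>(t)\<close> is chosen so that \<open>g\<^sub>s\<close> maps the box
  \<open>|(Aq - p)\<^sub>i| < \<psi>(t)\<^bsup>\<alpha>\<^sub>i\<^esup>, |q\<^sub>j| < t\<^bsup>\<beta>\<^sub>j\<^esup>\<close> onto the box with half side lengths
  \<open>exp(-m\<alpha>\<^sub>i r)\<close> and \<open>exp(-n\<beta>\<^sub>j r)\<close>, the same \<open>r\<close> in every coordinate.
  So the inequalities defining \<open>DI\<close> are solvable at time \<open>t\<close> iff \<open>g\<^sub>s\<Lambda>\<^sub>A\<close> has a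
  nonzero vector in that box (vectors with \<open>q = 0\<close> are too long to matter).
  As \<open>\<omega>\<^sub>2 \<le> m\<alpha>\<^sub>i, n\<beta>\<^sub>j \<le> \<omega>\<^sub>1\<close>, the box lies between the sup-norm balls of radii
  \<open>exp(-\<omega>\<^sub>1 r)\<close> and \<open>exp(-\<omega>\<^sub>2 r)\<close>: solvability gives \<open>\<Delta>(g\<^sub>s\<Lambda>\<^sub>A) > \<omega>\<^sub>2 r(s)\<close>,
  non-solvability gives \<open>\<Delta>(g\<^sub>s\<Lambda>\<^sub>A) \<le> \<omega>\<^sub>1 r(s)\<close>. Passing from the real time
  \<open>s\<close> to the integer time \<open>\<lfloor>s\<rfloor>\<close> costs the factor \<open>C\<^sub>r\<close>, because a step of length
  one is at most \<open>s\<^sup>\<eta>\<close>; and \<open>\<Delta> \<ge> 0\<close>, needed for membership in \<open>\<Delta>\<^sup>~\<close>, is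
  Dirichlet's theorem.
\<close>

section \<open>Dirichlet's theorem\<close>

text \<open>
  Points of the torus \<open>\<real>\<^sup>m/\<int>\<^sup>m\<close> are rounded to the grid \<open>(1/N)\<int>\<^sup>m\<close>, and each is
  thickened to a box of \<open>\<Prod> K\<^sub>i\<close> grid points; too many points force two thickened boxes
  to overlap, and the thickening absorbs the rounding error.
\<close>

lemma inj_on_add_mod:
  fixes c :: "'m::finite \<Rightarrow> nat"
  assumes K_le: "\<And>i. K i \<le> N"
  shows "inj_on (\<lambda>d i. (c i + d i) mod N) (Pi\<^sub>E UNIV (\<lambda>i. {..<K i}))"
proof (rule inj_onI, rule ext)
  fix d d' i assume "d \<in> Pi\<^sub>E UNIV (\<lambda>i. {..<K i})" "d' \<in> Pi\<^sub>E UNIV (\<lambda>i. {..<K i})"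
    and eq: "(\<lambda>i. (c i + d i) mod N) = (\<lambda>i. (c i + d' i) mod N)"
  then have "d i < K i" "d' i < K i"
    by (auto simp: PiE_iff)
  then have "d i < N" "d' i < N"
    using K_le[of i] by linarith+
  moreover have "(c i + d i) mod N = (c i + d' i) mod N"
    using fun_cong[OF eq, of i] .
  then have "d i mod N = d' i mod N"
    by (simp add: nat_mod_eq_iff)
  ultimately show "d i = d' i"
    by simp
qed

lemma torus_pigeonhole:
  fixes c :: "'a \<Rightarrow> 'm::finite \<Rightarrow> nat" and K :: "'m \<Rightarrow> nat" and N :: nat
  assumes F: "finite F" and K_le: "\<And>i. K i \<le> N"
    and count: "N ^ CARD('m) < card F * (\<Prod>i\<in>UNIV. K i)"
  obtains f f' d d' where "f \<in> F" "f' \<in> F" "f \<noteq> f'" "\<And>i. d i < K i" "\<And>i. d' i < K i"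
    "\<And>i. (c f i + d i) mod N = (c f' i + d' i) mod N"
proof -
  define D where "D = Pi\<^sub>E UNIV (\<lambda>i. {..<K i})"
  define G where "G = Pi\<^sub>E UNIV (\<lambda>i::'m. {..<N})"
  define shift where "shift f = (\<lambda>d i. (c f i + d i) mod N)" for f
  have inj: "inj_on (shift f) D" for f
    unfolding shift_def D_def using K_le by (rule inj_on_add_mod)
  have N_pos: "0 < N"
  proof (rule ccontr)
    assume "\<not> 0 < N"
    then have "K i = 0" for i
      using K_le[of i] by simp
    then show False
      using count by (simp add: zero_power)
  qed
  have "\<exists>f\<in>F. \<exists>f'\<in>F. f \<noteq> f' \<and> shift f ` D \<inter> shift f' ` D \<noteq> {}"
  proof (rule ccontr)
    assume "\<not> ?thesis"
    then have disj: "\<forall>f\<in>F. \<forall>f'\<in>F. f \<noteq> f' \<longrightarrow> shift f ` D \<inter> shift f' ` D = {}"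
      by blast
    have "card F * (\<Prod>i\<in>UNIV. K i) = (\<Sum>f\<in>F. card (shift f ` D))"
      using inj by (simp add: card_image D_def card_PiE)
    also have "\<dots> = card (\<Union>f\<in>F. shift f ` D)"
      by (rule card_UN_disjoint[symmetric, OF F _ disj]) (simp add: D_def finite_PiE)
    also have "\<dots> \<le> card G"
      using N_pos by (intro card_mono) (auto simp: G_def finite_PiE shift_def)
    also have "\<dots> = N ^ CARD('m)"
      by (simp add: G_def card_PiE)
    finally show False
      using count by simp
  qed
  then obtain f f' d d' where "f \<in> F" "f' \<in> F" "f \<noteq> f'" "d \<in> D" "d' \<in> D" "shift f d = shift f' d'"
    by blast
  then show ?thesis
    using that[of f f' d d'] by (simp add: D_def PiE_iff shift_def fun_eq_iff)
qed

lemma near_integer_of_mod_eq: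
  fixes a a' :: real and N K d d' :: nat
  assumes "0 < N" "0 \<le> a" "0 \<le> a'" "d < K" "d' < K"
    and mod_eq: "(nat \<lfloor>N * a\<rfloor> + d) mod N = (nat \<lfloor>N * a'\<rfloor> + d') mod N"
  obtains z :: int where "\<bar>a - a' - z\<bar> < K / N"
proof -
  define c c' where "c = \<lfloor>N * a\<rfloor>" and "c' = \<lfloor>N * a'\<rfloor>"
  have "0 \<le> c" "0 \<le> c'"
    using assms by (simp_all add: c_def c'_def)
  then have "(c + d) mod N = (c' + d') mod N"
    using mod_eq by (metis c_def c'_def nat_eq_iff of_nat_add of_nat_mod)
  then obtain z where z: "(c + d) - (c' + d') = int N * z"
    by (metis dvd_def mod_eq_dvd_iff)
  have "real N * (a - a' - z) = (N * a - c) - (N * a' - c') + (real d' - real d)"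
    using arg_cong[OF z, of real_of_int] by (simp add: algebra_simps)
  also have "\<bar>\<dots>\<bar> < K"
    using assms by (simp add: c_def c'_def) linarith
  finally show ?thesis
    using that[of z] \<open>0 < N\<close> by (simp add: abs_mult pos_less_divide_eq mult.commute)
qed

lemma exists_fine_grid:
  fixes \<epsilon> :: "'m::finite \<Rightarrow> real" and P :: nat
  assumes \<epsilon>: "\<And>i. 0 < \<epsilon> i" "\<And>i. \<epsilon> i \<le> 1" and P: "1 < P * (\<Prod>i\<in>UNIV. \<epsilon> i)"
  obtains N :: nat and K :: "'m \<Rightarrow> nat"
  where "0 < N" "\<And>i. K i \<le> N" "\<And>i. K i \<le> N * \<epsilon> i" "N ^ CARD('m) < P * (\<Prod>i\<in>UNIV. K i)"
proof -
  have "(\<lambda>N::nat. P * (\<Prod>i\<in>UNIV. \<epsilon> i - 1 / N)) \<longlonglongrightarrow> P * (\<Prod>i\<in>UNIV. \<epsilon> i - 0)"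
    by (intro tendsto_intros lim_const_over_n)
  then have "\<forall>\<^sub>F N in sequentially. 1 < P * (\<Prod>i\<in>UNIV. \<epsilon> i - 1 / N)"
    using P by (simp add: order_tendstoD(1))
  moreover have "\<forall>\<^sub>F N in sequentially. \<forall>i. 1 / real N < \<epsilon> i"
    using \<epsilon>(1) by (intro eventually_all_finite allI order_tendstoD(2)[OF lim_const_over_n])
  ultimately obtain N :: nat where N: "0 < N" "1 < P * (\<Prod>i\<in>UNIV. \<epsilon> i - 1 / N)"
    "\<And>i. 1 / real N < \<epsilon> i"
    by (metis (mono_tags, lifting) eventually_conj eventually_gt_at_top eventually_sequentially
        order_refl)
  define K where "K i = nat \<lfloor>N * \<epsilon> i\<rfloor>" for i
  have K_le: "K i \<le> N * \<epsilon> i" for i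
    using \<epsilon>(1)[of i] by (simp add: K_def)
  have K_ge: "N * \<epsilon> i - 1 \<le> K i" for i
    unfolding K_def by linarith
  have "real (N ^ CARD('m)) < N ^ CARD('m) * (P * (\<Prod>i\<in>UNIV. \<epsilon> i - 1 / N))"
    using N by simp
  also have "\<dots> = P * (\<Prod>i\<in>UNIV. N * (\<epsilon> i - 1 / N))"
    by (simp add: prod.distrib)
  also have "\<dots> = P * (\<Prod>i\<in>UNIV. N * \<epsilon> i - 1)"
    using N(1) by (simp add: right_diff_distrib)
  also have "\<dots> \<le> P * (\<Prod>i\<in>UNIV. real (K i))"
  proof (intro mult_left_mono prod_mono conjI)
    fix i
    show "0 \<le> N * \<epsilon> i - 1"
      using N(1) N(3)[of i] by (simp add: field_simps)
  qed (use K_ge in auto)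
  finally have "N ^ CARD('m) < P * (\<Prod>i\<in>UNIV. K i)"
    by (metis of_nat_less_iff of_nat_mult of_nat_prod)
  moreover have "K i \<le> N" for i
    using K_le[of i] \<epsilon>(2)[of i] N(1) mult_left_le[of "\<epsilon> i" "real N"] by linarith
  ultimately show ?thesis
    using that N(1) K_le by blast
qed

lemma pigeonhole_mod_1:
  fixes x :: "'a \<Rightarrow> 'm::finite \<Rightarrow> real" and \<epsilon> :: "'m \<Rightarrow> real"
  assumes F: "finite F" and \<epsilon>: "\<And>i. 0 < \<epsilon> i" "\<And>i. \<epsilon> i \<le> 1"
    and card_F: "1 < card F * (\<Prod>i\<in>UNIV. \<epsilon> i)"
  obtains f f' z where "f \<in> F" "f' \<in> F" "f \<noteq> f'" "\<And>i. \<bar>x f i - x f' i - of_int (z i)\<bar> < \<epsilon> i"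
proof -
  obtain N K where N: "0 < N" "\<And>i. K i \<le> N" "\<And>i. K i \<le> N * \<epsilon> i"
    "N ^ CARD('m) < card F * (\<Prod>i\<in>UNIV. K i)"
    using exists_fine_grid[OF \<epsilon> card_F] by blast
  obtain f f' d d' where ff': "f \<in> F" "f' \<in> F" "f \<noteq> f'" and d: "\<And>i. d i < K i" "\<And>i. d' i < K i"
    and mod_eq: "\<And>i. (nat \<lfloor>N * frac (x f i)\<rfloor> + d i) mod N = (nat \<lfloor>N * frac (x f' i)\<rfloor> + d' i) mod N"
    using torus_pigeonhole[OF F N(2) N(4), of "\<lambda>f i. nat \<lfloor>N * frac (x f i)\<rfloor>"] by blast
  have "\<exists>z::int. \<bar>x f i - x f' i - z\<bar> < \<epsilon> i" for i
  proof -
    obtain z :: int where "\<bar>frac (x f i) - frac (x f' i) - z\<bar> < K i / N"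
      using near_integer_of_mod_eq[OF N(1) _ _ d(1) d(2) mod_eq] by auto
    moreover have "K i / N \<le> \<epsilon> i"
      using N(1,3) by (simp add: divide_le_eq mult.commute)
    ultimately show ?thesis
      by (intro exI[of _ "\<lfloor>x f i\<rfloor> - \<lfloor>x f' i\<rfloor> + z"]) (simp add: frac_def algebra_simps)
  qed
  then obtain z :: "'m \<Rightarrow> int" where "\<And>i. \<bar>x f i - x f' i - z i\<bar> < \<epsilon> i"
    by metis
  then show ?thesis
    using that ff' by blast
qed

lemma prod_less_card_integer_box:
  fixes Q :: "'n::finite \<Rightarrow> real"
  assumes "\<And>j. 0 \<le> Q j"
  shows "(\<Prod>j\<in>UNIV. Q j) < card (Pi\<^sub>E UNIV (\<lambda>j. {..nat \<lfloor>Q j\<rfloor>}))"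
proof -
  define M where "M j = nat \<lfloor>Q j\<rfloor>" for j
  have "Q j < real (M j + 1)" for j
    using assms[of j] by (simp add: M_def) linarith
  then have "(\<Prod>j\<in>UNIV. Q j) < (\<Prod>j\<in>UNIV. real (M j + 1))"
    using assms by (intro prod_mono_strict[of undefined]) (auto intro: less_imp_le)
  then show ?thesis
    by (simp add: card_PiE M_def)
qed

lemma Dirichlet_approx_matrix:
  fixes A :: "real^'n^'m" and \<epsilon> :: "'m \<Rightarrow> real" and Q :: "'n \<Rightarrow> real"
  assumes \<epsilon>: "\<And>i. 0 < \<epsilon> i" "\<And>i. \<epsilon> i \<le> 1" and Q: "\<And>j. 0 \<le> Q j"
    and vol: "1 \<le> (\<Prod>i\<in>UNIV. \<epsilon> i) * (\<Prod>j\<in>UNIV. Q j)"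
  obtains p q where "p \<in> intvecs" "q \<in> intvecs" "q \<noteq> 0" "\<And>j. \<bar>q $ j\<bar> \<le> Q j"
    "\<And>i. \<bar>(A *v q - p) $ i\<bar> < \<epsilon> i"
proof -
  define F where "F = Pi\<^sub>E UNIV (\<lambda>j. {..nat \<lfloor>Q j\<rfloor>})"
  define v :: "('n \<Rightarrow> nat) \<Rightarrow> real^'n" where "v f = (\<chi> j. real (f j))" for f
  have "(\<Prod>i\<in>UNIV. \<epsilon> i) * (\<Prod>j\<in>UNIV. Q j) < (\<Prod>i\<in>UNIV. \<epsilon> i) * card F"
    using prod_less_card_integer_box[OF Q] \<epsilon>(1) by (simp add: F_def prod_pos)
  then have "1 < card F * (\<Prod>i\<in>UNIV. \<epsilon> i)"
    using vol by (simp add: mult.commute)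
  then obtain f f' z where ff': "f \<in> F" "f' \<in> F" "f \<noteq> f'"
    and z: "\<And>i. \<bar>(A *v v f) $ i - (A *v v f') $ i - of_int (z i)\<bar> < \<epsilon> i"
    using pigeonhole_mod_1[of F \<epsilon> "\<lambda>f i. (A *v v f) $ i"] \<epsilon> by (auto simp: F_def finite_PiE)
  define q where "q = v f - v f'"
  define p :: "real^'m" where "p = (\<chi> i. of_int (z i))"
  have "\<bar>(A *v q - p) $ i\<bar> < \<epsilon> i" for i
    using z[of i] by (simp add: q_def p_def matrix_vector_mult_diff_distrib)
  moreover have "q \<noteq> 0"
    using ff' by (auto simp: q_def v_def F_def vec_eq_iff PiE_iff fun_eq_iff)
  moreover have "\<bar>q $ j\<bar> \<le> Q j" for j
  proof -
    have "f j \<le> nat \<lfloor>Q j\<rfloor>" "f' j \<le> nat \<lfloor>Q j\<rfloor>"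
      using ff' by (auto simp: F_def PiE_iff)
    then show ?thesis
      using Q[of j] by (simp add: q_def v_def) linarith
  qed
  moreover have "q \<in> intvecs" "p \<in> intvecs"
    by (auto simp: intvecs_def q_def v_def p_def)
  ultimately show ?thesis
    using that by blast
qed

section \<open>Lattices under the diagonal flow\<close>

lemma supn_le_iff: "supn v \<le> c \<longleftrightarrow> (\<forall>i. \<bar>fst v $ i\<bar> \<le> c) \<and> (\<forall>j. \<bar>snd v $ j\<bar> \<le> c)"
  by (simp add: supn_def Max_le_iff)

lemma supn_less_iff: "supn v < c \<longleftrightarrow> (\<forall>i. \<bar>fst v $ i\<bar> < c) \<and> (\<forall>j. \<bar>snd v $ j\<bar> < c)"
  by (simp add: supn_def Max_less_iff)

lemma abs_fst_le_supn: "\<bar>fst v $ i\<bar> \<le> supn v"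
  and abs_snd_le_supn: "\<bar>snd v $ j\<bar> \<le> supn v"
  using supn_le_iff[of v "supn v"] by simp_all

definition weighted_box :: "real^'m \<Rightarrow> real^'n \<Rightarrow> real \<Rightarrow> ((real^'m) \<times> (real^'n)) set" where
  "weighted_box \<alpha> \<beta> R = {v. (\<forall>i. \<bar>fst v $ i\<bar> < exp (- (CARD('m) * \<alpha> $ i * R))) \<and>
      (\<forall>j. \<bar>snd v $ j\<bar> < exp (- (CARD('n) * \<beta> $ j * R)))}"

lemma supn_less_if_in_weighted_box:
  fixes \<alpha> :: "real^'m" and \<beta> :: "real^'n"
  assumes "v \<in> weighted_box \<alpha> \<beta> R" "0 \<le> R"
    and w: "\<And>i. w \<le> CARD('m) * \<alpha> $ i" "\<And>j. w \<le> CARD('n) * \<beta> $ j"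
  shows "supn v < exp (- (w * R))"
proof -
  have box: "\<bar>fst v $ i\<bar> < exp (- (CARD('m) * \<alpha> $ i * R))"
    "\<bar>snd v $ j\<bar> < exp (- (CARD('n) * \<beta> $ j * R))" for i j
    using assms(1) by (simp_all add: weighted_box_def)
  have exp_le: "exp (- (CARD('m) * \<alpha> $ i * R)) \<le> exp (- (w * R))"
    "exp (- (CARD('n) * \<beta> $ j * R)) \<le> exp (- (w * R))" for i j
    using mult_right_mono[OF w(1)[of i] \<open>0 \<le> R\<close>] mult_right_mono[OF w(2)[of j] \<open>0 \<le> R\<close>]
    by simp_all
  show ?thesis
    unfolding supn_less_iff
  proof (intro conjI allI)
    show "\<bar>fst v $ i\<bar> < exp (- (w * R))" for i
      using box(1)[of i] exp_le(1)[of i] by linarith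
    show "\<bar>snd v $ j\<bar> < exp (- (w * R))" for j
      using box(2)[of j] exp_le(2)[of j] by linarith
  qed
qed

lemma supn_ge_if_not_in_weighted_box:
  fixes \<alpha> :: "real^'m" and \<beta> :: "real^'n"
  assumes "v \<notin> weighted_box \<alpha> \<beta> R" "0 \<le> R"
    and w: "\<And>i. CARD('m) * \<alpha> $ i \<le> w" "\<And>j. CARD('n) * \<beta> $ j \<le> w"
  shows "exp (- (w * R)) \<le> supn v"
proof -
  consider i where "exp (- (CARD('m) * \<alpha> $ i * R)) \<le> \<bar>fst v $ i\<bar>"
    | j where "exp (- (CARD('n) * \<beta> $ j * R)) \<le> \<bar>snd v $ j\<bar>"
    using assms(1) by (auto simp: weighted_box_def not_less)
  then show ?thesis
  proof cases
    case (1 i)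
    moreover have "exp (- (w * R)) \<le> exp (- (CARD('m) * \<alpha> $ i * R))"
      using mult_right_mono[OF w(1)[of i] \<open>0 \<le> R\<close>] by simp
    ultimately show ?thesis
      using abs_fst_le_supn[of v i] by linarith
  next
    case (2 j)
    moreover have "exp (- (w * R)) \<le> exp (- (CARD('n) * \<beta> $ j * R))"
      using mult_right_mono[OF w(2)[of j] \<open>0 \<le> R\<close>] by simp
    ultimately show ?thesis
      using abs_snd_le_supn[of v j] by linarith
  qed
qed

lemma supn_pos: "v \<noteq> 0 \<Longrightarrow> 0 < supn v"
  by (rule ccontr) (auto simp: not_less supn_le_iff prod_eq_iff vec_eq_iff)

lemma gflow_fst [simp]: "fst (gflow \<alpha> \<beta> s v) $ i = exp (\<alpha> $ i * s) * fst v $ i"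
  and gflow_snd [simp]: "snd (gflow \<alpha> \<beta> s v) $ j = exp (- (\<beta> $ j * s)) * snd v $ j"
  by (simp_all add: gflow_def)

lemma gflow_gflow: "gflow \<alpha> \<beta> s (gflow \<alpha> \<beta> s' v) = gflow \<alpha> \<beta> (s + s') v"
  by (simp add: gflow_def vec_eq_iff exp_add[symmetric] algebra_simps)

lemma gflow_zero [simp]: "gflow \<alpha> \<beta> 0 v = v"
  by (simp add: gflow_def vec_eq_iff prod_eq_iff)

lemma gflow_eq_0_iff [simp]: "gflow \<alpha> \<beta> s v = 0 \<longleftrightarrow> v = 0"
  by (simp add: prod_eq_iff vec_eq_iff)

lemma intvecs_nonzero_component:
  assumes "x \<in> intvecs" "x \<noteq> 0"
  obtains i where "1 \<le> \<bar>x $ i\<bar>"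
proof -
  obtain i where "x $ i \<noteq> 0"
    using assms(2) by (auto simp: vec_eq_iff)
  moreover have "x $ i \<in> \<int>"
    using assms(1) by (simp add: intvecs_def)
  ultimately show ?thesis
    using that Ints_nonzero_abs_ge1 by blast
qed

lemma flowed_LambdaA_nonzero_cases:
  assumes "v \<in> gflow \<alpha> \<beta> s ` LambdaA A - {0}"
  obtains (horizontal) x i where "x \<in> intvecs" "1 \<le> \<bar>x $ i\<bar>" "v = gflow \<alpha> \<beta> s (x, 0)"
  | (generic) x y where "x \<in> intvecs" "y \<in> intvecs" "y \<noteq> 0" "v = gflow \<alpha> \<beta> s (x + A *v y, y)"
proof -
  obtain x y where xy: "x \<in> intvecs" "y \<in> intvecs" "v = gflow \<alpha> \<beta> s (x + A *v y, y)"
    using assms by (auto simp: LambdaA_def)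
  show ?thesis
  proof (cases "y = 0")
    case True
    have "x \<noteq> 0"
    proof
      assume "x = 0"
      then have "v = gflow \<alpha> \<beta> s 0"
        using xy(3) True by (simp add: zero_prod_def)
      then show False
        using assms by simp
    qed
    with xy(1) obtain i where "1 \<le> \<bar>x $ i\<bar>"
      by (rule intvecs_nonzero_component)
    then show ?thesis
      using horizontal xy True by simp
  qed (use generic xy in blast)
qed

lemma gflow_diff_in_flowed_LambdaA:
  assumes "p \<in> intvecs" "q \<in> intvecs" "q \<noteq> 0"
  shows "gflow \<alpha> \<beta> s (A *v q - p, q) \<in> gflow \<alpha> \<beta> s ` LambdaA A - {0}"
proof -
  have "- p \<in> intvecs"
    using assms(1) by (simp add: intvecs_def)
  then have "(- p + A *v q, q) \<in> LambdaA A"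
    using assms(2) unfolding LambdaA_def by blast
  moreover have "(A *v q - p, q) \<noteq> 0"
    using assms(3) by (simp add: zero_prod_def)
  ultimately show ?thesis
    by (metis DiffI imageI singletonD gflow_eq_0_iff diff_conv_add_uminus add.commute)
qed

lemma flowed_LambdaA_nonempty:
  fixes A :: "real^'n^'m"
  shows "gflow \<alpha> \<beta> s ` LambdaA A - {0} \<noteq> {}"
proof -
  have "(\<chi> i. 1) \<in> intvecs" "0 \<in> intvecs"
    by (simp_all add: intvecs_def)
  then have "((\<chi> i. 1) + A *v 0, 0) \<in> LambdaA A"
    unfolding LambdaA_def by blast
  moreover have "((\<chi> i. 1) + A *v 0, 0) \<noteq> (0 :: (real^'m) \<times> (real^'n))"
    by (simp add: vec_eq_iff zero_prod_def)
  ultimately show ?thesis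
    by auto
qed

lemma ln_inverse_supn_le_Delta:
  assumes "0 < c" and lower: "\<And>w. w \<in> L - {0} \<Longrightarrow> c \<le> supn w" and v: "v \<in> L - {0}"
  shows "ln (1 / supn v) \<le> Delta L"
  unfolding Delta_def
proof (rule cSup_upper)
  show "ln (1 / supn v) \<in> (\<lambda>v. ln (1 / supn v)) ` (L - {0})"
    using v by blast
  show "bdd_above ((\<lambda>v. ln (1 / supn v)) ` (L - {0}))"
  proof (rule bdd_aboveI2)
    fix w assume "w \<in> L - {0}"
    then have "c \<le> supn w"
      by (rule lower)
    then show "ln (1 / supn w) \<le> ln (1 / c)"
      using \<open>0 < c\<close> by (simp add: ln_div)
  qed
qed

lemma Delta_le:
  assumes "L - {0} \<noteq> {}" and "\<And>v. v \<in> L - {0} \<Longrightarrow> exp (- \<rho>) \<le> supn v"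
  shows "Delta L \<le> \<rho>"
  unfolding Delta_def
proof (rule cSup_least)
  fix x assume "x \<in> (\<lambda>v. ln (1 / supn v)) ` (L - {0})"
  then obtain v where "v \<in> L - {0}" "x = ln (1 / supn v)"
    by blast
  moreover from this have "exp (- \<rho>) \<le> supn v"
    using assms(2) by blast
  moreover from this have "0 < supn v"
    using exp_gt_zero order_less_le_trans by blast
  ultimately show "x \<le> \<rho>"
    using ln_ge_iff[of "supn v" "- \<rho>"] by (simp add: ln_div)
qed (use assms(1) in blast)

lemma gflow_image_in_Delta_tilde_iff:
  "gflow \<alpha> \<beta> k ` L \<in> Delta_tilde \<alpha> \<beta> \<rho> \<longleftrightarrow>
    (\<exists>\<sigma>\<in>{k..<k + 1}. Delta (gflow \<alpha> \<beta> \<sigma> ` L) \<in> {0..\<rho>})"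
proof
  assume "gflow \<alpha> \<beta> k ` L \<in> Delta_tilde \<alpha> \<beta> \<rho>"
  then obtain s L' where s: "s \<in> {0..<1}" and L': "Delta L' \<in> {0..\<rho>}"
    and eq: "gflow \<alpha> \<beta> k ` L = gflow \<alpha> \<beta> (- s) ` L'"
    by (auto simp: Delta_tilde_def)
  have "L' = gflow \<alpha> \<beta> s ` gflow \<alpha> \<beta> (- s) ` L'"
    by (simp add: image_image gflow_gflow)
  also have "\<dots> = gflow \<alpha> \<beta> (k + s) ` L"
    by (simp add: eq[symmetric] image_image gflow_gflow add.commute)
  finally show "\<exists>\<sigma>\<in>{k..<k + 1}. Delta (gflow \<alpha> \<beta> \<sigma> ` L) \<in> {0..\<rho>}"
    using s L' by (intro bexI[of _ "k + s"]) auto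
next
  assume "\<exists>\<sigma>\<in>{k..<k + 1}. Delta (gflow \<alpha> \<beta> \<sigma> ` L) \<in> {0..\<rho>}"
  then obtain \<sigma> where \<sigma>: "\<sigma> \<in> {k..<k + 1}" "Delta (gflow \<alpha> \<beta> \<sigma> ` L) \<in> {0..\<rho>}"
    by blast
  have "gflow \<alpha> \<beta> k ` L = gflow \<alpha> \<beta> (- (\<sigma> - k)) ` gflow \<alpha> \<beta> \<sigma> ` L"
    by (simp add: image_image gflow_gflow)
  then have "gflow \<alpha> \<beta> k ` L \<in> (\<lambda>L. gflow \<alpha> \<beta> (- (\<sigma> - k)) ` L) ` {L. Delta L \<in> {0..\<rho>}}"
    using \<sigma>(2) by blast
  then show "gflow \<alpha> \<beta> k ` L \<in> Delta_tilde \<alpha> \<beta> \<rho>"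
    unfolding Delta_tilde_def using \<sigma>(1) by (intro UN_I[of "\<sigma> - k"]) auto
qed

locale weight_vectors =
  fixes \<alpha> :: "real^'m" and \<beta> :: "real^'n"
  assumes alpha_pos: "\<And>i. 0 < \<alpha> $ i" and alpha_sum: "(\<Sum>i\<in>UNIV. \<alpha> $ i) = 1"
    and beta_pos: "\<And>j. 0 < \<beta> $ j" and beta_sum: "(\<Sum>j\<in>UNIV. \<beta> $ j) = 1"
begin

lemma beta_le_1: "\<beta> $ j \<le> 1"
  using member_le_sum[of j UNIV "\<lambda>j. \<beta> $ j"] beta_pos beta_sum by (simp add: less_imp_le)

lemma omega2_le: "omega2 \<alpha> \<beta> \<le> CARD('m) * \<alpha> $ i" "omega2 \<alpha> \<beta> \<le> CARD('n) * \<beta> $ j"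
  by (auto simp: omega2_def intro: Min_le)

lemma omega1_ge: "CARD('m) * \<alpha> $ i \<le> omega1 \<alpha> \<beta>" "CARD('n) * \<beta> $ j \<le> omega1 \<alpha> \<beta>"
  by (auto simp: omega1_def intro: Max_ge)

lemma omega2_pos: "0 < omega2 \<alpha> \<beta>"
  using alpha_pos beta_pos by (auto simp: omega2_def Min_gr_iff)

lemma omega1_nonneg: "0 \<le> omega1 \<alpha> \<beta>"
proof -
  have "0 \<le> CARD('m) * \<alpha> $ i" for i
    using alpha_pos[of i] by simp
  then show ?thesis
    using omega1_ge(1) order_trans by blast
qed

lemma horizontal_flowed_ge_1:
  assumes "0 \<le> s" "1 \<le> \<bar>x $ i\<bar>"
  shows "1 \<le> \<bar>fst (gflow \<alpha> \<beta> s (x, 0)) $ i\<bar>"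
proof -
  have "1 * 1 \<le> exp (\<alpha> $ i * s) * \<bar>x $ i\<bar>"
    using assms alpha_pos[of i] by (intro mult_mono) auto
  then show ?thesis
    by (simp add: abs_mult)
qed

lemma supn_flowed_LambdaA_ge:
  assumes "0 \<le> s" and v: "v \<in> gflow \<alpha> \<beta> s ` LambdaA A - {0}"
  shows "exp (- s) \<le> supn v"
  using v
proof (cases rule: flowed_LambdaA_nonzero_cases)
  case (horizontal x i)
  have "exp (- s) \<le> 1"
    using assms(1) by simp
  also have "\<dots> \<le> \<bar>fst v $ i\<bar>"
    unfolding horizontal(3) by (rule horizontal_flowed_ge_1[OF assms(1) horizontal(2)])
  finally show ?thesis
    using abs_fst_le_supn[of v i] by linarith
next
  case (generic x y)
  obtain j where j: "1 \<le> \<bar>y $ j\<bar>"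
    using generic(2,3) by (rule intvecs_nonzero_component)
  have "\<beta> $ j * s \<le> s"
    using beta_le_1[of j] beta_pos[of j] assms(1) by (simp add: mult_left_le_one_le)
  then have "exp (- s) \<le> exp (- (\<beta> $ j * s)) * 1"
    by simp
  also have "\<dots> \<le> exp (- (\<beta> $ j * s)) * \<bar>y $ j\<bar>"
    using j by (intro mult_left_mono) auto
  also have "\<dots> = \<bar>snd v $ j\<bar>"
    using generic(4) by (simp add: abs_mult)
  finally show ?thesis
    using abs_snd_le_supn[of v j] by linarith
qed

lemma ln_inverse_supn_le_Delta_flowed:
  assumes "0 \<le> s" "v \<in> gflow \<alpha> \<beta> s ` LambdaA A - {0}"
  shows "ln (1 / supn v) \<le> Delta (gflow \<alpha> \<beta> s ` LambdaA A)"
  using ln_inverse_supn_le_Delta[OF exp_gt_zero supn_flowed_LambdaA_ge[OF assms(1)] assms(2)] .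

lemma flowed_LambdaA_has_vector_supn_le_1:
  assumes "0 \<le> s"
  obtains v where "v \<in> gflow \<alpha> \<beta> s ` LambdaA A - {0}" "supn v \<le> 1"
proof -
  have "(\<Prod>i\<in>UNIV. exp (- (\<alpha> $ i * s))) * (\<Prod>j\<in>UNIV. exp (\<beta> $ j * s)) =
      exp (- (\<Sum>i\<in>UNIV. \<alpha> $ i) * s) * exp ((\<Sum>j\<in>UNIV. \<beta> $ j) * s)"
    by (simp add: exp_sum[symmetric] sum_negf sum_distrib_right)
  also have "\<dots> = 1"
    by (simp add: alpha_sum beta_sum exp_minus)
  finally have vol: "1 \<le> (\<Prod>i\<in>UNIV. exp (- (\<alpha> $ i * s))) * (\<Prod>j\<in>UNIV. exp (\<beta> $ j * s))"
    by simp
  have "exp (- (\<alpha> $ i * s)) \<le> 1" for i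
    using alpha_pos[of i] assms by simp
  then obtain p q where pq: "p \<in> intvecs" "q \<in> intvecs" "q \<noteq> 0"
    "\<And>j. \<bar>q $ j\<bar> \<le> exp (\<beta> $ j * s)" "\<And>i. \<bar>(A *v q - p) $ i\<bar> < exp (- (\<alpha> $ i * s))"
    using Dirichlet_approx_matrix[OF exp_gt_zero _ less_imp_le[OF exp_gt_zero] vol] by blast
  define v where "v = gflow \<alpha> \<beta> s (A *v q - p, q)"
  have "\<bar>fst v $ i\<bar> \<le> 1" for i
  proof -
    have "\<bar>fst v $ i\<bar> = exp (\<alpha> $ i * s) * \<bar>(A *v q - p) $ i\<bar>"
      by (simp add: v_def abs_mult)
    also have "\<dots> \<le> exp (\<alpha> $ i * s) * exp (- (\<alpha> $ i * s))"
      using pq(5)[of i] by (intro mult_left_mono) auto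
    finally show ?thesis
      by (simp add: exp_minus)
  qed
  moreover have "\<bar>snd v $ j\<bar> \<le> 1" for j
  proof -
    have "\<bar>snd v $ j\<bar> = exp (- (\<beta> $ j * s)) * \<bar>q $ j\<bar>"
      by (simp add: v_def abs_mult)
    also have "\<dots> \<le> exp (- (\<beta> $ j * s)) * exp (\<beta> $ j * s)"
      using pq(4)[of j] by (intro mult_left_mono) auto
    finally show ?thesis
      by (simp add: exp_minus)
  qed
  moreover have "v \<in> gflow \<alpha> \<beta> s ` LambdaA A - {0}"
    unfolding v_def using pq(1-3) by (rule gflow_diff_in_flowed_LambdaA)
  ultimately show ?thesis
    using that by (simp add: supn_le_iff)
qed

lemma Delta_flowed_LambdaA_nonneg:
  assumes "0 \<le> s"
  shows "0 \<le> Delta (gflow \<alpha> \<beta> s ` LambdaA A)"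
proof -
  obtain v where v: "v \<in> gflow \<alpha> \<beta> s ` LambdaA A - {0}" "supn v \<le> 1"
    using flowed_LambdaA_has_vector_supn_le_1[OF assms] .
  then have "0 \<le> ln (1 / supn v)"
    using supn_pos[of v] by (simp add: ln_div)
  also have "\<dots> \<le> Delta (gflow \<alpha> \<beta> s ` LambdaA A)"
    using assms v(1) by (rule ln_inverse_supn_le_Delta_flowed)
  finally show ?thesis .
qed

end

section \<open>The time change\<close>

lemma stime_add_ln_psi:
  assumes "0 < m + n" "0 < t" "0 < \<psi> t"
  shows "stime m n \<psi> t + ln (\<psi> t) = real m / (m + n) * ln (t * \<psi> t)"
    and "ln t - stime m n \<psi> t = real n / (m + n) * ln (t * \<psi> t)"
proof -
  define a b where "a = real m / (m + n)" and "b = real n / (m + n)"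
  have "real (m + n) \<noteq> 0"
    using assms(1) by (simp add: add_nonneg_eq_0_iff)
  then have "b = 1 - a"
    unfolding a_def b_def by (simp only: diff_divide_distrib[symmetric] divide_self[symmetric] of_nat_add) simp
  then have ab: "x = a * x + b * x" for x
    by (simp add: left_diff_distrib)
  show "stime m n \<psi> t + ln (\<psi> t) = real m / (m + n) * ln (t * \<psi> t)"
    and "ln t - stime m n \<psi> t = real n / (m + n) * ln (t * \<psi> t)"
    using assms unfolding stime_def a_def[symmetric] b_def[symmetric]
    by (simp_all add: ln_mult algebra_simps) (use ab[of "ln t"] ab[of "ln (\<psi> t)"] in linarith)+
qed

locale time_change =
  fixes m n :: nat and \<psi> :: "real \<Rightarrow> real" and t0 :: real
  assumes m_pos: "0 < m" and t0_gt_1: "1 < t0"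
    and psi_cont: "continuous_on {t0..} \<psi>"
    and psi_pos: "\<And>t. t0 \<le> t \<Longrightarrow> 0 < \<psi> t"
    and psi_antimono: "\<And>t t'. t0 \<le> t \<Longrightarrow> t \<le> t' \<Longrightarrow> \<psi> t' \<le> \<psi> t"
    and psi_less: "\<And>t. t0 \<le> t \<Longrightarrow> \<psi> t < 1 / t"
begin

abbreviation s_of :: "real \<Rightarrow> real" where "s_of \<equiv> stime m n \<psi>"

abbreviation t_of :: "real \<Rightarrow> real" where "t_of \<equiv> tfun m n \<psi> t0"

abbreviation r_of :: "real \<Rightarrow> real" where "r_of \<equiv> rfun m n \<psi> t0"

lemma stime_less:
  assumes "t0 \<le> t" "t < t'"
  shows "s_of t < s_of t'"
proof -
  have "real m / (m + n) * ln t < real m / (m + n) * ln t'"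
    using assms t0_gt_1 m_pos by (intro mult_strict_left_mono) auto
  moreover have "real n / (m + n) * ln (\<psi> t') \<le> real n / (m + n) * ln (\<psi> t)"
    using assms psi_pos psi_antimono by (intro mult_left_mono) auto
  ultimately show ?thesis
    unfolding stime_def by linarith
qed

lemma stime_le: "t0 \<le> t \<Longrightarrow> t \<le> t' \<Longrightarrow> s_of t \<le> s_of t'"
  using stime_less[of t t'] by (cases "t = t'") auto

lemma ln_le_stime:
  assumes "t0 \<le> t"
  shows "ln t \<le> s_of t"
proof -
  have "ln (\<psi> t) \<le> ln (1 / t)"
    using assms t0_gt_1 psi_pos psi_less by (simp add: less_imp_le)
  then have "real n / (m + n) * ln (\<psi> t) \<le> real n / (m + n) * (- ln t)"
    using assms t0_gt_1 by (intro mult_left_mono) (auto simp: ln_div)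
  moreover have "real m / (m + n) * ln t + real n / (m + n) * ln t = ln t"
    using m_pos by (simp add: add_divide_distrib[symmetric] distrib_right[symmetric])
  ultimately show ?thesis
    unfolding stime_def by linarith
qed

lemma stime_nonneg: "t0 \<le> t \<Longrightarrow> 0 \<le> s_of t"
  using ln_le_stime[of t] ln_ge_zero[of t] t0_gt_1 by linarith

lemma tfun_stime:
  assumes "t0 \<le> t"
  shows "t_of (s_of t) = t"
  unfolding tfun_def
proof (rule the_equality)
  fix t' assume "t0 \<le> t' \<and> s_of t = s_of t'"
  then show "t' = t"
    using stime_less[of t t'] stime_less[of t' t] assms by (cases t t' rule: linorder_cases) auto
qed (use assms in simp)

lemma stime_surj:
  assumes "s_of t0 \<le> s"
  obtains t where "t0 \<le> t" "s_of t = s"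
proof -
  define T where "T = max t0 (exp s)"
  have "s \<le> ln T"
    using ln_ge_iff[of T s] t0_gt_1 by (simp add: T_def)
  also have "\<dots> \<le> s_of T"
    by (rule ln_le_stime) (simp add: T_def)
  finally have "s \<le> s_of T" .
  moreover have "continuous_on {t0..T} s_of"
  proof -
    have "continuous_on {t0..T} \<psi>"
      using psi_cont by (rule continuous_on_subset) auto
    then show ?thesis
      unfolding stime_def using t0_gt_1 by (intro continuous_intros) (auto dest!: psi_pos)
  qed
  ultimately obtain t where "t0 \<le> t" "t \<le> T" "s_of t = s"
    using IVT'[of s_of t0 s T] assms by (auto simp: T_def)
  then show ?thesis
    using that by blast
qed

lemma tfun_ge: "s_of t0 \<le> s \<Longrightarrow> t0 \<le> t_of s"
  and stime_tfun: "s_of t0 \<le> s \<Longrightarrow> s_of (t_of s) = s"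
  by (metis stime_surj tfun_stime)+

lemma le_tfun:
  assumes "t0 \<le> T" "s_of T \<le> s"
  shows "T \<le> t_of s"
proof (rule ccontr)
  have s: "s_of t0 \<le> s"
    using stime_le[OF order_refl assms(1)] assms(2) by simp
  assume "\<not> T \<le> t_of s"
  then have "s_of (t_of s) < s_of T"
    using stime_less tfun_ge[OF s] by simp
  then show False
    using assms(2) stime_tfun[OF s] by simp
qed

lemma eventually_at_top_tfun_iff: "eventually P at_top \<longleftrightarrow> (\<forall>\<^sub>F s in at_top. P (t_of s))"
proof
  assume "eventually P at_top"
  then obtain T where T: "\<And>t. T \<le> t \<Longrightarrow> P t"
    by (auto simp: eventually_at_top_linorder)
  have "P (t_of s)" if "s_of (max T t0) \<le> s" for s
    using le_tfun[OF max.cobounded2 that] by (intro T) simp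
  then show "\<forall>\<^sub>F s in at_top. P (t_of s)"
    by (auto simp: eventually_at_top_linorder)
next
  assume "\<forall>\<^sub>F s in at_top. P (t_of s)"
  then obtain S where S: "\<And>s. S \<le> s \<Longrightarrow> P (t_of s)"
    by (auto simp: eventually_at_top_linorder)
  have "P t" if t: "max t0 (exp S) \<le> t" for t
  proof -
    have "S \<le> ln t"
      using ln_ge_iff[of t S] t t0_gt_1 by simp
    also have "\<dots> \<le> s_of t"
      using t by (intro ln_le_stime) simp
    finally show ?thesis
      using S tfun_stime t by fastforce
  qed
  then show "eventually P at_top"
    by (auto simp: eventually_at_top_linorder intro!: exI[of _ "max t0 (exp S)"])
qed

lemma rfun_nonneg:
  assumes "s_of t0 \<le> s"
  shows "0 \<le> r_of s"
proof -
  define t where "t = t_of s"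
  have "t0 \<le> t"
    using tfun_ge[OF assms] by (simp add: t_def)
  then have "0 < t * \<psi> t" "t * \<psi> t \<le> 1"
    using t0_gt_1 psi_pos psi_less[of t] by (simp_all add: field_simps)
  then have "ln (t * \<psi> t) \<le> 0"
    by simp
  then show ?thesis
    by (simp add: rfun_def t_def[symmetric] divide_nonpos_nonneg)
qed

end

section \<open>Solvability and short lattice vectors\<close>

lemma powr_inverse_less_iff:
  fixes x b e :: real
  assumes "0 \<le> x" "0 < e" "0 < b"
  shows "x powr (1 / e) < b \<longleftrightarrow> x < b powr e"
proof
  assume "x powr (1 / e) < b"
  then have "(x powr (1 / e)) powr e < b powr e"
    using assms by (intro powr_less_mono2) auto
  then show "x < b powr e"
    using assms by (simp add: powr_powr)
next
  assume "x < b powr e"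
  then have "x powr (1 / e) < (b powr e) powr (1 / e)"
    using assms by (intro powr_less_mono2) auto
  then show "x powr (1 / e) < b"
    using assms by (simp add: powr_powr)
qed

lemma scaled_powr_inverse_less_iff:
  fixes u b e s :: real
  assumes "0 < e" "0 < b"
  shows "\<bar>u\<bar> powr (1 / e) < b \<longleftrightarrow> exp (e * s) * \<bar>u\<bar> < exp (e * (s + ln b))"
proof -
  have "exp (e * (s + ln b)) = exp (e * s) * b powr e"
    using assms by (simp add: powr_def distrib_left exp_add)
  then show ?thesis
    using powr_inverse_less_iff[of "\<bar>u\<bar>" e b] assms by simp
qed

definition DI_solvable :: "real^'m \<Rightarrow> real^'n \<Rightarrow> (real \<Rightarrow> real) \<Rightarrow> real^'n^'m \<Rightarrow> real \<Rightarrow> bool" where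
  "DI_solvable \<alpha> \<beta> \<psi> A t \<longleftrightarrow> (\<exists>p q. p \<in> intvecs \<and> q \<in> intvecs \<and> q \<noteq> 0 \<and>
      (\<forall>i. \<bar>(A *v q - p) $ i\<bar> powr (1 / \<alpha> $ i) < \<psi> t) \<and> (\<forall>j. \<bar>q $ j\<bar> powr (1 / \<beta> $ j) < t))"

lemma DI_iff_eventually_solvable: "A \<in> DI \<alpha> \<beta> \<psi> \<longleftrightarrow> eventually (DI_solvable \<alpha> \<beta> \<psi> A) at_top"
  by (simp add: DI_def DI_solvable_def[abs_def])

locale DI_setting = weight_vectors \<alpha> \<beta> + time_change "CARD('m)" "CARD('n)" \<psi> t0
  for \<alpha> :: "real^'m" and \<beta> :: "real^'n" and \<psi> :: "real \<Rightarrow> real" and t0 :: real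
begin

lemma DI_inequalities_iff_in_weighted_box:
  assumes "s_of t0 \<le> s"
  shows "(\<forall>i. \<bar>(A *v q - p) $ i\<bar> powr (1 / \<alpha> $ i) < \<psi> (t_of s)) \<and> (\<forall>j. \<bar>q $ j\<bar> powr (1 / \<beta> $ j) < t_of s) \<longleftrightarrow>
    gflow \<alpha> \<beta> s (A *v q - p, q) \<in> weighted_box \<alpha> \<beta> (r_of s)"
proof -
  define t where "t = t_of s"
  have t: "t0 \<le> t" "s_of t = s"
    using tfun_ge[OF assms(1)] stime_tfun[OF assms(1)] by (simp_all add: t_def)
  then have pos: "0 < t" "0 < \<psi> t"
    using t0_gt_1 psi_pos by auto
  have r: "r_of s = - (ln (t * \<psi> t) / (CARD('m) + CARD('n)))"
    by (simp add: rfun_def t_def)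
  have "s + ln (\<psi> t) = - (CARD('m) * r_of s)"
    using stime_add_ln_psi(1)[of "CARD('m)" "CARD('n)" t \<psi>] pos t(2) r by simp
  then have "\<bar>(A *v q - p) $ i\<bar> powr (1 / \<alpha> $ i) < \<psi> t \<longleftrightarrow>
      \<bar>fst (gflow \<alpha> \<beta> s (A *v q - p, q)) $ i\<bar> < exp (- (CARD('m) * \<alpha> $ i * r_of s))" for i
    using scaled_powr_inverse_less_iff[OF alpha_pos[of i] pos(2), of "(A *v q - p) $ i" s]
    by (simp add: abs_mult mult_ac)
  moreover have "- s + ln t = - (CARD('n) * r_of s)"
    using stime_add_ln_psi(2)[of "CARD('m)" "CARD('n)" t \<psi>] pos t(2) r by simp
  then have "\<bar>q $ j\<bar> powr (1 / \<beta> $ j) < t \<longleftrightarrow>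
      \<bar>snd (gflow \<alpha> \<beta> s (A *v q - p, q)) $ j\<bar> < exp (- (CARD('n) * \<beta> $ j * r_of s))" for j
    using scaled_powr_inverse_less_iff[OF beta_pos[of j] pos(1), of "q $ j" "- s"]
    by (simp add: abs_mult mult_ac)
  ultimately show ?thesis
    by (simp add: weighted_box_def t_def)
qed

lemma Delta_gt_if_solvable:
  assumes s: "s_of t0 \<le> s" and "DI_solvable \<alpha> \<beta> \<psi> A (t_of s)"
    and w: "\<And>i. w \<le> CARD('m) * \<alpha> $ i" "\<And>j. w \<le> CARD('n) * \<beta> $ j"
  shows "w * r_of s < Delta (gflow \<alpha> \<beta> s ` LambdaA A)"
proof -
  obtain p q where pq: "p \<in> intvecs" "q \<in> intvecs" "q \<noteq> 0"
    and box: "gflow \<alpha> \<beta> s (A *v q - p, q) \<in> weighted_box \<alpha> \<beta> (r_of s)"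
    using assms(2) DI_inequalities_iff_in_weighted_box[OF s] by (auto simp: DI_solvable_def)
  define v where "v = gflow \<alpha> \<beta> s (A *v q - p, q)"
  have v: "v \<in> gflow \<alpha> \<beta> s ` LambdaA A - {0}"
    unfolding v_def using pq by (rule gflow_diff_in_flowed_LambdaA)
  then have "0 < supn v"
    by (simp add: supn_pos)
  moreover have "supn v < exp (- (w * r_of s))"
    using box rfun_nonneg[OF s] w unfolding v_def by (rule supn_less_if_in_weighted_box)
  ultimately have "ln (supn v) < - (w * r_of s)"
    using ln_strict_mono[of "supn v" "exp (- (w * r_of s))"] by simp
  then have "w * r_of s < ln (1 / supn v)"
    using \<open>0 < supn v\<close> by (simp add: ln_div)
  also have "\<dots> \<le> Delta (gflow \<alpha> \<beta> s ` LambdaA A)"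
    using stime_nonneg[of t0] s v by (intro ln_inverse_supn_le_Delta_flowed) auto
  finally show ?thesis .
qed

lemma Delta_le_if_not_solvable:
  assumes s: "s_of t0 \<le> s" and not_solvable: "\<not> DI_solvable \<alpha> \<beta> \<psi> A (t_of s)"
    and w: "\<And>i. CARD('m) * \<alpha> $ i \<le> w" "\<And>j. CARD('n) * \<beta> $ j \<le> w"
  shows "Delta (gflow \<alpha> \<beta> s ` LambdaA A) \<le> w * r_of s"
proof (rule Delta_le[OF flowed_LambdaA_nonempty])
  have r: "0 \<le> r_of s"
    by (rule rfun_nonneg[OF s])
  have s_nonneg: "0 \<le> s"
    using stime_nonneg[of t0] s by simp
  fix v assume "v \<in> gflow \<alpha> \<beta> s ` LambdaA A - {0}"
  then show "exp (- (w * r_of s)) \<le> supn v"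
  proof (cases rule: flowed_LambdaA_nonzero_cases)
    case (horizontal x i)
    have "0 \<le> CARD('m) * \<alpha> $ i"
      using alpha_pos[of i] by simp
    then have "exp (- (w * r_of s)) \<le> 1"
      using w(1)[of i] r by simp
    also have "\<dots> \<le> \<bar>fst v $ i\<bar>"
      unfolding horizontal(3) by (rule horizontal_flowed_ge_1[OF s_nonneg horizontal(2)])
    finally show ?thesis
      using abs_fst_le_supn[of v i] by linarith
  next
    case (generic x y)
    have "- x \<in> intvecs"
      using generic(1) by (simp add: intvecs_def)
    then have "gflow \<alpha> \<beta> s (A *v y - - x, y) \<notin> weighted_box \<alpha> \<beta> (r_of s)"
      using not_solvable generic(2,3) DI_inequalities_iff_in_weighted_box[OF s]
      unfolding DI_solvable_def by blast
    moreover have "v = gflow \<alpha> \<beta> s (A *v y - - x, y)"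
      using generic(4) by (simp add: add.commute)
    ultimately show ?thesis
      using r w by (intro supn_ge_if_not_in_weighted_box) auto
  qed
qed

lemma eventually_Delta_gt_if_DI:
  assumes "A \<in> DI \<alpha> \<beta> \<psi>"
  shows "\<forall>\<^sub>F s in at_top. omega2 \<alpha> \<beta> * r_of s < Delta (gflow \<alpha> \<beta> s ` LambdaA A)"
proof -
  have "\<forall>\<^sub>F s in at_top. DI_solvable \<alpha> \<beta> \<psi> A (t_of s)"
    using assms by (simp add: DI_iff_eventually_solvable eventually_at_top_tfun_iff[symmetric])
  then show ?thesis
    using eventually_ge_at_top[of "s_of t0"]
    by eventually_elim (rule Delta_gt_if_solvable[OF _ _ omega2_le])
qed

lemma frequently_Delta_le_if_not_DI:
  assumes "A \<notin> DI \<alpha> \<beta> \<psi>"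
  shows "\<exists>\<^sub>F s in at_top. Delta (gflow \<alpha> \<beta> s ` LambdaA A) \<in> {0..omega1 \<alpha> \<beta> * r_of s}"
proof -
  have "\<exists>\<^sub>F s in at_top. \<not> DI_solvable \<alpha> \<beta> \<psi> A (t_of s)"
    using assms by (simp add: DI_iff_eventually_solvable eventually_at_top_tfun_iff[symmetric]
        not_eventually[symmetric])
  moreover have "\<forall>\<^sub>F s in at_top. s_of t0 \<le> s"
    by (rule eventually_ge_at_top)
  ultimately show ?thesis
    by (rule frequently_rev_mp[OF _ eventually_mono])
      (auto intro!: Delta_le_if_not_solvable Delta_flowed_LambdaA_nonneg omega1_ge
        order_trans[OF stime_nonneg[of t0]])
qed

end

section \<open>From real to integer times\<close>

lemma eventually_at_top_unit_intervals:
  fixes P :: "real \<Rightarrow> bool"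
  assumes "eventually P at_top"
  shows "\<forall>\<^sub>F k in sequentially. \<forall>\<sigma>\<in>{real k..<real k + 1}. P \<sigma>"
proof -
  obtain S where S: "\<And>s. S \<le> s \<Longrightarrow> P s"
    using assms by (auto simp: eventually_at_top_linorder)
  have "\<forall>\<sigma>\<in>{real k..<real k + 1}. P \<sigma>" if "nat \<lceil>S\<rceil> \<le> k" for k
    using that by (auto intro!: S)
  then show ?thesis
    unfolding eventually_sequentially by blast
qed

lemma frequently_at_top_unit_intervals:
  fixes P :: "real \<Rightarrow> bool"
  assumes "frequently P at_top"
  shows "\<exists>\<^sub>F k in sequentially. \<exists>\<sigma>\<in>{real k..<real k + 1}. P \<sigma>"
  unfolding frequently_sequentially
proof
  fix N
  obtain s where s: "real N \<le> s" "P s"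
    using assms by (auto simp: frequently_def eventually_at_top_linorder)
  then have "N \<le> nat \<lfloor>s\<rfloor>" "s \<in> {real (nat \<lfloor>s\<rfloor>)..<real (nat \<lfloor>s\<rfloor>) + 1}"
    by (auto simp: le_nat_floor)
  then show "\<exists>k\<ge>N. \<exists>\<sigma>\<in>{real k..<real k + 1}. P \<sigma>"
    using s(2) by blast
qed

lemma gflow_not_in_Delta_tilde:
  assumes "0 < C" "0 \<le> c"
    and large: "\<And>\<sigma>. \<sigma> \<in> {k..<k + 1} \<Longrightarrow> c * r \<sigma> < Delta (gflow \<alpha> \<beta> \<sigma> ` L) \<and> r (k + 1) \<le> C * r \<sigma>"
  shows "gflow \<alpha> \<beta> k ` L \<notin> Delta_tilde \<alpha> \<beta> (c / C * r (k + 1))"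
proof
  assume "gflow \<alpha> \<beta> k ` L \<in> Delta_tilde \<alpha> \<beta> (c / C * r (k + 1))"
  then obtain \<sigma> where \<sigma>: "\<sigma> \<in> {k..<k + 1}" and "Delta (gflow \<alpha> \<beta> \<sigma> ` L) \<le> c / C * r (k + 1)"
    by (auto simp: gflow_image_in_Delta_tilde_iff)
  moreover have "c / C * r (k + 1) \<le> c / C * (C * r \<sigma>)"
    using large[OF \<sigma>] assms(1,2) by (intro mult_left_mono) auto
  ultimately show False
    using large[OF \<sigma>] assms(1) by simp
qed

lemma gflow_in_Delta_tilde:
  assumes "\<sigma> \<in> {k..<k + 1}" "Delta (gflow \<alpha> \<beta> \<sigma> ` L) \<in> {0..c * r \<sigma>}" "0 \<le> c" "r \<sigma> \<le> C * r k"
  shows "gflow \<alpha> \<beta> k ` L \<in> Delta_tilde \<alpha> \<beta> (c * C * r k)"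
proof -
  have "c * r \<sigma> \<le> c * C * r k"
    using mult_left_mono[OF assms(4,3)] by (simp add: mult.assoc)
  then show ?thesis
    using assms(1,2) by (auto simp: gflow_image_in_Delta_tilde_iff)
qed

context DI_setting
begin

lemma limsup_lower_subset_not_DI:
  assumes Cr: "0 < Cr"
    and r_step: "\<And>s1 s2. S \<le> s1 \<Longrightarrow> s1 \<le> s2 \<Longrightarrow> s2 \<le> s1 + 1 \<Longrightarrow> r_of s2 \<le> Cr * r_of s1"
  shows "{A. \<exists>\<^sub>F k in sequentially. s_of t0 \<le> real k \<and>
      gflow \<alpha> \<beta> (real k) ` LambdaA A \<in> Delta_tilde \<alpha> \<beta> (omega2 \<alpha> \<beta> / Cr * r_of (real k + 1))}
    \<subseteq> - DI \<alpha> \<beta> \<psi>"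
proof (intro subsetI ComplI)
  fix A assume A: "A \<in> {A. \<exists>\<^sub>F k in sequentially. s_of t0 \<le> real k \<and>
      gflow \<alpha> \<beta> (real k) ` LambdaA A \<in> Delta_tilde \<alpha> \<beta> (omega2 \<alpha> \<beta> / Cr * r_of (real k + 1))}"
  assume "A \<in> DI \<alpha> \<beta> \<psi>"
  then have "\<forall>\<^sub>F s in at_top. S \<le> s \<and> omega2 \<alpha> \<beta> * r_of s < Delta (gflow \<alpha> \<beta> s ` LambdaA A)"
    by (intro eventually_conj eventually_ge_at_top eventually_Delta_gt_if_DI)
  then have "\<forall>\<^sub>F k in sequentially. gflow \<alpha> \<beta> (real k) ` LambdaA A \<notin>
      Delta_tilde \<alpha> \<beta> (omega2 \<alpha> \<beta> / Cr * r_of (real k + 1))"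
  proof (rule eventually_mono[OF eventually_at_top_unit_intervals])
    fix k :: nat
    assume "\<forall>\<sigma>\<in>{real k..<real k + 1}. S \<le> \<sigma> \<and>
        omega2 \<alpha> \<beta> * r_of \<sigma> < Delta (gflow \<alpha> \<beta> \<sigma> ` LambdaA A)"
    then show "gflow \<alpha> \<beta> (real k) ` LambdaA A \<notin> Delta_tilde \<alpha> \<beta> (omega2 \<alpha> \<beta> / Cr * r_of (real k + 1))"
      using Cr omega2_pos by (intro gflow_not_in_Delta_tilde) (auto intro: r_step)
  qed
  then have "\<forall>\<^sub>F k in sequentially. \<not> (s_of t0 \<le> real k \<and>
      gflow \<alpha> \<beta> (real k) ` LambdaA A \<in> Delta_tilde \<alpha> \<beta> (omega2 \<alpha> \<beta> / Cr * r_of (real k + 1)))"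
    by (rule eventually_mono) blast
  then show False
    using A by (simp add: frequently_def)
qed

lemma not_DI_subset_limsup_upper:
  assumes r_step: "\<And>s1 s2. S \<le> s1 \<Longrightarrow> s1 \<le> s2 \<Longrightarrow> s2 \<le> s1 + 1 \<Longrightarrow> r_of s2 \<le> Cr * r_of s1"
  shows "- DI \<alpha> \<beta> \<psi> \<subseteq> {A. \<exists>\<^sub>F k in sequentially. s_of t0 \<le> real k \<and>
      gflow \<alpha> \<beta> (real k) ` LambdaA A \<in> Delta_tilde \<alpha> \<beta> (omega1 \<alpha> \<beta> * Cr * r_of (real k))}"
proof
  fix A assume "A \<in> - DI \<alpha> \<beta> \<psi>"
  then have "\<exists>\<^sub>F s in at_top. max S (s_of t0) + 1 \<le> s \<and>
      Delta (gflow \<alpha> \<beta> s ` LambdaA A) \<in> {0..omega1 \<alpha> \<beta> * r_of s}"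
    by (intro frequently_eventually_conj eventually_ge_at_top frequently_Delta_le_if_not_DI) simp
  then have "\<exists>\<^sub>F k in sequentially. \<exists>\<sigma>\<in>{real k..<real k + 1}. max S (s_of t0) + 1 \<le> \<sigma> \<and>
      Delta (gflow \<alpha> \<beta> \<sigma> ` LambdaA A) \<in> {0..omega1 \<alpha> \<beta> * r_of \<sigma>}"
    by (rule frequently_at_top_unit_intervals)
  then show "A \<in> {A. \<exists>\<^sub>F k in sequentially. s_of t0 \<le> real k \<and>
      gflow \<alpha> \<beta> (real k) ` LambdaA A \<in> Delta_tilde \<alpha> \<beta> (omega1 \<alpha> \<beta> * Cr * r_of (real k))}"
  proof (simp only: mem_Collect_eq, elim frequently_elim1 bexE conjE)
    fix k :: nat and \<sigma>
    assume \<sigma>: "\<sigma> \<in> {real k..<real k + 1}" "max S (s_of t0) + 1 \<le> \<sigma>"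
      and Delta_in: "Delta (gflow \<alpha> \<beta> \<sigma> ` LambdaA A) \<in> {0..omega1 \<alpha> \<beta> * r_of \<sigma>}"
    have k: "S \<le> real k" "s_of t0 \<le> real k"
      using \<sigma> by auto
    have "r_of \<sigma> \<le> Cr * r_of (real k)"
      using \<sigma>(1) by (intro r_step[OF k(1)]) auto
    then show "s_of t0 \<le> real k \<and>
        gflow \<alpha> \<beta> (real k) ` LambdaA A \<in> Delta_tilde \<alpha> \<beta> (omega1 \<alpha> \<beta> * Cr * r_of (real k))"
      using k(2) gflow_in_Delta_tilde[where r = r_of, OF \<sigma>(1) Delta_in omega1_nonneg] by simp
  qed
qed

end

theorem lemma3p5:
  fixes \<alpha> :: "real^'m" and \<beta> :: "real^'n" and \<psi> :: "real \<Rightarrow> real"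
    and t0 C\<psi> \<eta> Cr sstar :: real
  assumes alpha_pos: "\<forall>i. \<alpha> $ i > 0" and alpha_sum: "(\<Sum>i\<in>UNIV. \<alpha> $ i) = 1"
    and beta_pos: "\<forall>j. \<beta> $ j > 0" and beta_sum: "(\<Sum>j\<in>UNIV. \<beta> $ j) = 1"
    and t0: "t0 > 1"
    and psi_cont: "continuous_on {t0..} \<psi>"
    and psi_pos: "\<forall>t\<ge>t0. \<psi> t > 0"
    and psi_decr: "\<forall>t1 t2. t0 \<le> t1 \<and> t1 \<le> t2 \<longrightarrow> \<psi> t2 \<le> \<psi> t1"
    and psi_bounds: "\<forall>t\<ge>t0. 1 / (2 * t) \<le> \<psi> t \<and> \<psi> t < 1 / t"
    and Cpsi: "C\<psi> \<ge> 1" and eta: "0 < \<eta>" "\<eta> < 1"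
    and F_cond: "\<forall>t1 t2. t0 \<le> t1 \<and> t1 \<le> t2 \<and> t2 \<le> t1 * exp ((ln t1) powr \<eta>) \<longrightarrow>
                   1 - t2 * \<psi> t2 \<le> C\<psi> * (1 - t1 * \<psi> t1)"
    and Cr: "Cr \<ge> 1"
    and r_cond: "\<forall>s1 s2. max sstar (stime CARD('m) CARD('n) \<psi> t0) \<le> s1 \<and> s1 \<le> s2 \<and> s2 \<le> s1 + s1 powr \<eta> \<longrightarrow>
                   rfun CARD('m) CARD('n) \<psi> t0 s2 \<le> Cr * rfun CARD('m) CARD('n) \<psi> t0 s1"
  shows "{A :: real^'n^'m. \<exists>\<^sub>F k in sequentially. stime CARD('m) CARD('n) \<psi> t0 \<le> real k \<and>
            gflow \<alpha> \<beta> (real k) ` LambdaA A \<in>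
              Delta_tilde \<alpha> \<beta> (omega2 \<alpha> \<beta> / Cr * rfun CARD('m) CARD('n) \<psi> t0 (real k + 1))}
           \<subseteq> - DI \<alpha> \<beta> \<psi>
       \<and> - DI \<alpha> \<beta> \<psi> \<subseteq>
         {A :: real^'n^'m. \<exists>\<^sub>F k in sequentially. stime CARD('m) CARD('n) \<psi> t0 \<le> real k \<and>
            gflow \<alpha> \<beta> (real k) ` LambdaA A \<in>
              Delta_tilde \<alpha> \<beta> (omega1 \<alpha> \<beta> * Cr * rfun CARD('m) CARD('n) \<psi> t0 (real k))}"
proof -
  interpret DI_setting \<alpha> \<beta> \<psi> t0
    using assms by unfold_locales auto
  define S where "S = max (max sstar (s_of t0)) 1"
  have r_step: "r_of s2 \<le> Cr * r_of s1" if "S \<le> s1" "s1 \<le> s2" "s2 \<le> s1 + 1" for s1 s2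
  proof -
    have "1 \<le> s1 powr \<eta>"
      using that eta by (simp add: S_def ge_one_powr_ge_zero)
    then show ?thesis
      using r_cond that by (auto simp: S_def)
  qed
  show ?thesis
    using limsup_lower_subset_not_DI[OF _ r_step] not_DI_subset_limsup_upper[OF r_step] Cr by simp
qed

end
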